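(* Let $k\ge3$ and let $\pi\in\mathcal{S}_n$ be a Schröder permutation. Then $\pi$ avoids the pattern $2\,1\,3\,4\cdots k$ if and only if every element $(i,j)\in\mathcal{E}(\pi)$ satisfies $i+j\ge n+3-k+\rho(i,j)$.
   Context: A permutation avoids $\tau\in\mathcal{S}_k$ if no subsequence of length $k$ is in the same relative order as $\tau$. A Schröder permutation is one avoiding both $1243$ and $2143$. Represent $\pi\in\mathcal{S}_n$ by an $n\times n$ array, rows $i$ numbered top to bottom, columns $j$ left to right, with a dot in square $(i,\pi_i)$. The diagram $D(\pi)$ is the set of squares $(i,j)$ with $\pi_i>j$ and $\pi^{-1}(j)>i$. The essential set $\mathcal{E}(\pi)$ is the set of $(i,j)\in D(\pi)$ with $(i+1,j)\notin D(\pi)$ and $(i,j+1)\notin D(\pi)$ (squares outside the array count as not in $D(\pi)$). The rank of $(i,j)$ is $\rho(i,j)=\#\{k'<i:\pi_{k'}<j\}$. *)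

theory Defs
  imports "HOL-Combinatorics.Permutations"
begin

text \<open>Permutations of [n] are functions nat => nat that permute {1..n}.
  A pattern tau in S_k is given as the list [tau_1, ..., tau_k].\<close>

definition contains :: "(nat \<Rightarrow> nat) \<Rightarrow> nat \<Rightarrow> nat list \<Rightarrow> bool" where
  "contains \<pi> n \<tau> \<longleftrightarrow> (\<exists>idx :: nat \<Rightarrow> nat.
      strict_mono_on {0..<length \<tau>} idx \<and>
      (\<forall>a<length \<tau>. idx a \<in> {1..n}) \<and>
      (\<forall>a<length \<tau>. \<forall>b<length \<tau>. \<pi> (idx a) < \<pi> (idx b) \<longleftrightarrow> \<tau> ! a < \<tau> ! b))"

definition avoids :: "(nat \<Rightarrow> nat) \<Rightarrow> nat \<Rightarrow> nat list \<Rightarrow> bool" where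
  "avoids \<pi> n \<tau> \<longleftrightarrow> \<not> contains \<pi> n \<tau>"

definition schroeder :: "(nat \<Rightarrow> nat) \<Rightarrow> nat \<Rightarrow> bool" where
  "schroeder \<pi> n \<longleftrightarrow> \<pi> permutes {1..n} \<and> avoids \<pi> n [1,2,4,3] \<and> avoids \<pi> n [2,1,4,3]"

definition diagram :: "(nat \<Rightarrow> nat) \<Rightarrow> nat \<Rightarrow> (nat \<times> nat) set" where
  "diagram \<pi> n = {(i,j). i \<in> {1..n} \<and> j \<in> {1..n} \<and> \<pi> i > j \<and> inv \<pi> j > i}"

definition essential_set :: "(nat \<Rightarrow> nat) \<Rightarrow> nat \<Rightarrow> (nat \<times> nat) set" where
  "essential_set \<pi> n = {(i,j). (i,j) \<in> diagram \<pi> n \<and> (i+1,j) \<notin> diagram \<pi> n \<and> (i,j+1) \<notin> diagram \<pi> n}"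

definition rank :: "(nat \<Rightarrow> nat) \<Rightarrow> nat \<Rightarrow> nat \<Rightarrow> nat" where
  "rank \<pi> i j = card {k'. 1 \<le> k' \<and> k' < i \<and> \<pi> k' < j}"

definition pat21 :: "nat \<Rightarrow> nat list" where
  "pat21 k = 2 # 1 # [3..<k+1]"

end

theory Submission imports Defs begin

(* Write SE(i,j) for the rows below i whose value exceeds j. For a cell (i,j) of the diagram,
   counting the rows with value below j on either side of row i gives
   |SE(i,j)| + i + j = n + rank(i,j), so the inequality fails exactly when |SE(i,j)| >= k - 2.

   If (i,j) is essential, the value j + 1 sits in a row x <= i and the value in row i + 1 is at
   most j. These two entries form a 2 1, and every other entry of SE(i,j) lies south-east of
   both; avoiding 2143 forces those entries to increase, so k - 2 of them complete 2 1 3 ... k.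
   Conversely, if the 2 1 of an occurrence sits in rows a < b, some row i in [a,b) has
   pi (i+1) < pi a <= pi i. Taking j + 1 to be the least value above pi (i+1) in rows 1..i makes
   (i,j) an essential cell north-west of the remaining k - 2 entries. *)

lemma contains_if_order_preserving:
  assumes "length xs = length \<tau>" "distinct \<tau>" "sorted_wrt (<) xs" "set xs \<subseteq> {1..n}"
    and preserving: "\<And>a b. a < length \<tau> \<Longrightarrow> b < length \<tau> \<Longrightarrow>
      \<tau>!a < \<tau>!b \<Longrightarrow> \<pi> (xs!a) < \<pi> (xs!b)"
  shows "contains \<pi> n \<tau>"
  unfolding contains_def
proof (intro exI[of _ "(!) xs"] conjI allI impI)
  show "strict_mono_on {0..<length \<tau>} ((!) xs)"
    using assms(1,3) by (auto simp: strict_mono_on_def sorted_wrt_nth_less)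
  show "xs ! a \<in> {1..n}" if "a < length \<tau>" for a
    using assms(1,4) that by (metis nth_mem subsetD)
  show "\<pi> (xs!a) < \<pi> (xs!b) \<longleftrightarrow> \<tau>!a < \<tau>!b"
    if a: "a < length \<tau>" and b: "b < length \<tau>" for a b
  proof (cases "a = b")
    case False
    then have "\<tau>!a \<noteq> \<tau>!b"
      using nth_eq_iff_index_eq[OF assms(2) a b] by simp
    then show ?thesis
      using preserving[OF a b] preserving[OF b a] by (cases "\<tau>!a < \<tau>!b") auto
  qed simp
qed

lemma length_pat21 [simp]: "length (pat21 k) = k" if "k \<ge> 2"
  using that by (simp add: pat21_def del: upt_Suc)

lemma pat21_less_iff:
  assumes "a < k" "b < k"
  shows "pat21 k ! a < pat21 k ! b \<longleftrightarrow>
    (a = 1 \<and> b \<noteq> 1) \<or> (a = 0 \<and> 2 \<le> b) \<or> (2 \<le> a \<and> a < b)"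
proof -
  have "pat21 k ! m = (if m = 0 then 2 else if m = 1 then 1 else m + 1)" if "m < k" for m
    using that by (cases m; cases "m - 1")
      (auto simp: pat21_def nth_Cons' nth_upt simp del: upt_Suc)
  then show ?thesis using assms by auto
qed

lemma permutes_interval_simps:
  assumes "\<pi> permutes {1..n}"
  shows "\<pi> (inv \<pi> v) = v" "inv \<pi> (\<pi> q) = q"
    "\<pi> q \<in> {1..n} \<longleftrightarrow> q \<in> {1..n}" "inv \<pi> v \<in> {1..n} \<longleftrightarrow> v \<in> {1..n}"
  using permutes_inverses[OF assms] permutes_in_image[OF assms]
    permutes_in_image[OF permutes_inv[OF assms]] by auto

lemma card_positions_below_value:
  assumes perm: "\<pi> permutes {1..n}" and "j \<le> n + 1"
  shows "card {q \<in> {1..n}. \<pi> q < j} = j - 1"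
proof -
  note \<pi> = permutes_interval_simps[OF perm]
  have "{q \<in> {1..n}. \<pi> q < j} = inv \<pi> ` {1..<j}"
  proof (intro equalityI subsetI)
    fix q assume "q \<in> {q \<in> {1..n}. \<pi> q < j}"
    then show "q \<in> inv \<pi> ` {1..<j}"
      using \<pi>(2,3)[of q] by (intro image_eqI[of _ _ "\<pi> q"]) auto
  next
    fix q assume "q \<in> inv \<pi> ` {1..<j}"
    then obtain v where "v \<in> {1..<j}" "q = inv \<pi> v" by blast
    then show "q \<in> {q \<in> {1..n}. \<pi> q < j}"
      using assms(2) \<pi>(1,4)[of v] by auto
  qed
  moreover have "inj (inv \<pi>)"
    using permutes_inj[OF permutes_inv[OF perm]] .
  ultimately show ?thesis
    by (simp add: card_image inj_on_subset)
qed

definition southeast :: "(nat \<Rightarrow> nat) \<Rightarrow> nat \<Rightarrow> nat \<Rightarrow> nat \<Rightarrow> nat set" where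
  "southeast \<pi> n i j = {q. i < q \<and> q \<le> n \<and> j < \<pi> q}"

lemma finite_southeast [simp]: "finite (southeast \<pi> n i j)"
  by (rule finite_subset[of _ "{..n}"]) (auto simp: southeast_def)

lemma southeast_antimono: "i \<le> i' \<Longrightarrow> j \<le> j' \<Longrightarrow> southeast \<pi> n i' j' \<subseteq> southeast \<pi> n i j"
  by (auto simp: southeast_def)

lemma card_southeast:
  assumes perm: "\<pi> permutes {1..n}" and D: "(i,j) \<in> diagram \<pi> n"
  shows "card (southeast \<pi> n i j) + i + j = n + rank \<pi> i j"
proof -
  note \<pi> = permutes_interval_simps[OF perm]
  from D have ij:
      "1 \<le> i" "i \<le> n" "1 \<le> j" "j \<le> n" "j < \<pi> i" "i < inv \<pi> j" "inv \<pi> j \<le> n"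
    using \<pi>(4)[of j] by (auto simp: diagram_def)
  define R where "R = {q. 1 \<le> q \<and> q < i \<and> \<pi> q < j}"
  define A where "A = {q. i < q \<and> q \<le> n \<and> \<pi> q < j}"
  have "finite R" "finite A"
    by (auto intro: finite_subset[of _ "{..n}"] simp: R_def A_def)
  have "{q \<in> {1..n}. \<pi> q < j} = R \<union> A"
    using ij by (auto simp: R_def A_def not_less_iff_gr_or_eq)
  moreover have "R \<inter> A = {}"
    by (auto simp: R_def A_def)
  ultimately have below: "card R + card A = j - 1"
    using card_positions_below_value[OF perm, of j] ij \<open>finite R\<close> \<open>finite A\<close>
    by (simp add: card_Un_disjoint)
  have "{i<..n} = insert (inv \<pi> j) (A \<union> southeast \<pi> n i j)"
    using ij \<pi>(1,2) by (auto simp: A_def southeast_def not_less_iff_gr_or_eq)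
  then have "n - i = card (insert (inv \<pi> j) (A \<union> southeast \<pi> n i j))"
    by (metis card_greaterThanAtMost)
  moreover have "inv \<pi> j \<notin> A \<union> southeast \<pi> n i j" "A \<inter> southeast \<pi> n i j = {}"
    using \<pi>(1)[of j] by (auto simp: A_def southeast_def)
  ultimately have after: "n - i = card A + 1 + card (southeast \<pi> n i j)"
    using \<open>finite A\<close> by (simp add: card_Un_disjoint)
  have "rank \<pi> i j = card R"
    by (simp add: rank_def R_def)
  with below after ij show ?thesis
    by linarith
qed

lemma essential_set_boundary:
  assumes perm: "\<pi> permutes {1..n}" and E: "(i, j) \<in> essential_set \<pi> n"
  shows "i < n" "j < n" "\<pi> (i + 1) \<le> j" "1 \<le> inv \<pi> (j + 1)" "inv \<pi> (j + 1) \<le> i"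
proof -
  note \<pi> = permutes_interval_simps[OF perm]
  from E have ij: "1 \<le> i" "i \<le> n" "1 \<le> j" "j \<le> n" "j < \<pi> i" "i < inv \<pi> j"
    and below: "(i + 1, j) \<notin> diagram \<pi> n" and right: "(i, j + 1) \<notin> diagram \<pi> n"
    by (auto simp: essential_set_def diagram_def)
  show "i < n" "j < n"
    using ij \<pi>(3)[of i] \<pi>(4)[of j] by auto
  show "\<pi> (i + 1) \<le> j"
  proof (rule ccontr)
    assume "\<not> \<pi> (i + 1) \<le> j"
    with below ij \<open>i < n\<close> have "inv \<pi> j = i + 1"
      by (auto simp: diagram_def)
    with \<open>\<not> \<pi> (i + 1) \<le> j\<close> show False
      using \<pi>(1)[of j] by simp
  qed
  show "1 \<le> inv \<pi> (j + 1)"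
    using \<pi>(4)[of "j + 1"] \<open>j < n\<close> by simp
  show "inv \<pi> (j + 1) \<le> i"
  proof (rule ccontr)
    assume "\<not> inv \<pi> (j + 1) \<le> i"
    with right ij \<open>j < n\<close> have "\<pi> i = j + 1"
      by (auto simp: diagram_def)
    with \<open>\<not> inv \<pi> (j + 1) \<le> i\<close> show False
      using \<pi>(2)[of i] by simp
  qed
qed

lemma avoids_2143_strict_mono_on_southeast:
  assumes perm: "\<pi> permutes {1..n}" and av: "avoids \<pi> n [2,1,4,3]"
    and "1 \<le> x" "x < y" "\<pi> y < \<pi> x"
  shows "strict_mono_on (southeast \<pi> n y (\<pi> x)) \<pi>"
proof (rule strict_mono_onI)
  fix q q' assume q: "q \<in> southeast \<pi> n y (\<pi> x)" and q': "q' \<in> southeast \<pi> n y (\<pi> x)"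
    and "q < q'"
  show "\<pi> q < \<pi> q'"
  proof (rule ccontr)
    assume "\<not> \<pi> q < \<pi> q'"
    moreover have "\<pi> q \<noteq> \<pi> q'"
      using \<open>q < q'\<close> permutes_inj[OF perm] by (auto dest: injD)
    ultimately have "\<pi> q' < \<pi> q"
      by simp
    then have "contains \<pi> n [2,1,4,3]"
      using assms(3-5) q q' \<open>q < q'\<close>
      by (intro contains_if_order_preserving[of "[x, y, q, q']"])
        (auto simp: southeast_def less_Suc_eq numeral_eq_Suc)
    with av show False
      by (simp add: avoids_def)
  qed
qed

lemma contains_pat21I:
  assumes "k \<ge> 2" "1 \<le> x" "x < y" "y \<le> n" "\<pi> y < \<pi> x"
    and Q: "finite Q" "k - 2 \<le> card Q" "Q \<subseteq> southeast \<pi> n y (\<pi> x)" "strict_mono_on Q \<pi>"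
  shows "contains \<pi> n (pat21 k)"
proof -
  define l where "l = take (k - 2) (sorted_list_of_set Q)"
  have l: "sorted_wrt (<) l" "set l \<subseteq> Q" "length l = k - 2"
    using Q(1,2) set_take_subset[of "k - 2" "sorted_list_of_set Q"]
    by (simp_all add: l_def)
  have lQ: "l ! m \<in> Q" if "m < k - 2" for m
    using that l(2,3) nth_mem[of m l] by auto
  define xs where "xs = x # y # l"
  have xs_nth: "xs ! m = l ! (m - 2)" if "2 \<le> m" for m
    using that by (simp add: xs_def nth_Cons' numeral_2_eq_2)
  show ?thesis
  proof (rule contains_if_order_preserving[of xs])
    show "length xs = length (pat21 k)"
      using l(3) assms(1) by (simp add: xs_def)
    show "distinct (pat21 k)"
      by (simp add: pat21_def)
    show "sorted_wrt (<) xs" "set xs \<subseteq> {1..n}"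
      using l(1,2) Q(3) assms(2-4) by (auto simp: xs_def southeast_def)
    fix a b assume "a < length (pat21 k)" "b < length (pat21 k)" "pat21 k ! a < pat21 k ! b"
    then have "a < k" "b < k" "(a = 1 \<and> b \<noteq> 1) \<or> (a = 0 \<and> 2 \<le> b) \<or> (2 \<le> a \<and> a < b)"
      using assms(1) pat21_less_iff by auto
    then consider "a = 1" "b = 0" | "a \<le> 1" "2 \<le> b" | "2 \<le> a" "a < b"
      by linarith
    then show "\<pi> (xs ! a) < \<pi> (xs ! b)"
    proof cases
      case 1
      then show ?thesis using assms(5) by (simp add: xs_def)
    next
      case 2
      then have "l ! (b - 2) \<in> Q"
        using lQ \<open>b < k\<close> by simp
      with 2 have "\<pi> x < \<pi> (xs ! b)"
        using Q(3) xs_nth by (auto simp: southeast_def)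
      with 2 show ?thesis
        using assms(5) by (auto simp: xs_def le_Suc_eq)
    next
      case 3
      then have "l ! (a - 2) < l ! (b - 2)"
        using sorted_wrt_nth_less[OF l(1)] l(3) \<open>b < k\<close> by simp
      with 3 show ?thesis
        using strict_mono_onD[OF Q(4)] lQ \<open>b < k\<close> xs_nth by simp
    qed
  qed
qed

lemma contains_pat21E:
  assumes "contains \<pi> n (pat21 k)" "k \<ge> 2"
  obtains a b Q where "1 \<le> a" "a < b" "b \<le> n" "\<pi> b < \<pi> a"
    "card Q = k - 2" "Q \<subseteq> southeast \<pi> n b (\<pi> a)"
proof -
  obtain idx where mono: "strict_mono_on {0..<k} idx" and range: "\<forall>m<k. idx m \<in> {1..n}"
    and iso: "\<forall>m<k. \<forall>m'<k. \<pi> (idx m) < \<pi> (idx m') \<longleftrightarrow> pat21 k ! m < pat21 k ! m'"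
    using assms unfolding contains_def by auto
  have idx_less: "idx m < idx m'" if "m < m'" "m' < k" for m m'
    using strict_mono_onD[OF mono] that by simp
  have "inj_on idx {2..<k}"
    using strict_mono_on_imp_inj_on[OF mono] by (rule inj_on_subset) auto
  then have "card (idx ` {2..<k}) = k - 2"
    by (simp add: card_image)
  moreover have "idx ` {2..<k} \<subseteq> southeast \<pi> n (idx 1) (\<pi> (idx 0))"
    using idx_less range iso pat21_less_iff by (auto simp: southeast_def)
  moreover have "\<pi> (idx 1) < \<pi> (idx 0)"
    using iso pat21_less_iff assms(2) by auto
  ultimately show ?thesis
    using that[of "idx 0" "idx 1"] idx_less[of 0 1] range assms(2) by auto
qed

lemma nat_downcrossing_exists:
  fixes f :: "nat \<Rightarrow> 'a::linorder"
  assumes "a < b" "c \<le> f a" "f b < c"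
  shows "\<exists>i. a \<le> i \<and> i < b \<and> c \<le> f i \<and> f (Suc i) < c"
  using assms
proof (induction b)
  case 0
  then show ?case by simp
next
  case (Suc b)
  show ?case
  proof (cases "c \<le> f b")
    case True
    with Suc.prems show ?thesis
      by (intro exI[of _ b]) (auto simp: less_Suc_eq)
  next
    case False
    with Suc.prems have "a < b"
      by (auto simp: less_Suc_eq)
    with False Suc.IH Suc.prems(2) show ?thesis
      by (auto simp: not_le less_Suc_eq)
  qed
qed

lemma essential_cell_at_descent:
  assumes perm: "\<pi> permutes {1..n}" and "1 \<le> i" "i < n" "\<pi> (i + 1) < \<pi> i"
  obtains j where "(i, j) \<in> essential_set \<pi> n"
    "\<And>w. w \<in> \<pi> ` {1..i} \<Longrightarrow> \<pi> (i + 1) < w \<Longrightarrow> j < w"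
proof -
  note \<pi> = permutes_interval_simps[OF perm]
  define V where "V = {w \<in> \<pi> ` {1..i}. \<pi> (i + 1) < w}"
  define v where "v = Min V"
  have V: "finite V" "\<pi> i \<in> V"
    using assms(2,4) by (auto simp: V_def)
  have v_min: "v \<le> w" if "w \<in> V" for w
    using V(1) that by (simp add: v_def)
  have "v \<in> V"
    unfolding v_def using V by (intro Min_in) auto
  then obtain p where p: "p \<in> {1..i}" "\<pi> p = v" "\<pi> (i + 1) < v"
    by (auto simp: V_def)
  define j where "j = v - 1"
  have "1 \<le> \<pi> (i + 1)" "\<pi> p \<le> n"
    using \<pi>(3)[of "i + 1"] \<pi>(3)[of p] p(1) assms(3) by auto
  then have j: "j + 1 = v" "\<pi> (i + 1) \<le> j" "1 \<le> j" "j \<le> n"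
    using p by (auto simp: j_def)
  have "i < inv \<pi> j"
  proof (rule ccontr)
    assume "\<not> i < inv \<pi> j"
    moreover have "1 \<le> inv \<pi> j"
      using \<pi>(4)[of j] j by auto
    ultimately have "j \<in> \<pi> ` {1..i}"
      using \<pi>(1)[of j] by (metis atLeastAtMost_iff image_eqI not_less)
    moreover have "j \<noteq> \<pi> (i + 1)"
      using \<open>\<not> i < inv \<pi> j\<close> \<pi>(2)[of "i + 1"] by auto
    ultimately have "j \<in> V"
      using j(2) by (auto simp: V_def)
    with v_min j(1) show False
      by fastforce
  qed
  moreover have "inv \<pi> (j + 1) = p"
    using j(1) p(2) \<pi>(2)[of p] by simp
  ultimately have "(i, j) \<in> essential_set \<pi> n"
    using j v_min[OF V(2)] p(1) assms(2,3) by (auto simp: essential_set_def diagram_def)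
  moreover have "j < w" if "w \<in> \<pi> ` {1..i}" "\<pi> (i + 1) < w" for w
    using v_min[of w] that j(1) by (auto simp: V_def)
  ultimately show ?thesis
    using that by blast
qed

lemma essential_cell_northwest_of_descent:
  assumes perm: "\<pi> permutes {1..n}" and "1 \<le> a" "a < b" "b \<le> n" "\<pi> b < \<pi> a"
  obtains i j where "(i, j) \<in> essential_set \<pi> n" "i < b" "j < \<pi> a"
proof -
  obtain i where i: "a \<le> i" "i < b" "\<pi> a \<le> \<pi> i" "\<pi> (i + 1) < \<pi> a"
    using nat_downcrossing_exists[of a b "\<pi> a" \<pi>] assms(3,5) by auto
  have "1 \<le> i" "i < n" "\<pi> (i + 1) < \<pi> i"
    using i assms(2,4) by auto
  then obtain j where "(i, j) \<in> essential_set \<pi> n"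
    and "\<And>w. w \<in> \<pi> ` {1..i} \<Longrightarrow> \<pi> (i + 1) < w \<Longrightarrow> j < w"
    using essential_cell_at_descent[OF perm] by blast
  moreover have "\<pi> a \<in> \<pi> ` {1..i}"
    using assms(2) i(1) by auto
  ultimately show ?thesis
    using that[of i j] i(2,4) by blast
qed

lemma contains_pat21_imp_essential:
  assumes perm: "\<pi> permutes {1..n}" and "k \<ge> 2" "contains \<pi> n (pat21 k)"
  shows "\<exists>(i, j) \<in> essential_set \<pi> n. k - 2 \<le> card (southeast \<pi> n i j)"
proof -
  obtain a b Q where ab: "1 \<le> a" "a < b" "b \<le> n" "\<pi> b < \<pi> a"
    and Q: "card Q = k - 2" "Q \<subseteq> southeast \<pi> n b (\<pi> a)"
    using contains_pat21E[OF assms(3,2)] .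
  obtain i j where "(i, j) \<in> essential_set \<pi> n" "i < b" "j < \<pi> a"
    using essential_cell_northwest_of_descent[OF perm ab] .
  moreover have "k - 2 \<le> card (southeast \<pi> n i j)"
    using southeast_antimono[of i b j "\<pi> a"] calculation(2,3) Q
    by (metis card_mono finite_southeast less_imp_le order_trans)
  ultimately show ?thesis
    by blast
qed

lemma essential_imp_contains_pat21:
  assumes perm: "\<pi> permutes {1..n}" and av: "avoids \<pi> n [2,1,4,3]" and "k \<ge> 2"
    and E: "(i, j) \<in> essential_set \<pi> n" and card: "k - 2 \<le> card (southeast \<pi> n i j)"
  shows "contains \<pi> n (pat21 k)"
proof -
  note \<pi> = permutes_interval_simps[OF perm]
  note bd = essential_set_boundary[OF perm E]
  define x where "x = inv \<pi> (j + 1)"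
  have x: "1 \<le> x" "x < i + 1" "\<pi> (i + 1) < \<pi> x"
    using bd \<pi>(1) by (auto simp: x_def)
  have "southeast \<pi> n i j \<subseteq> southeast \<pi> n (i + 1) (\<pi> x)"
  proof
    fix q assume q: "q \<in> southeast \<pi> n i j"
    then have "q \<noteq> i + 1"
      using bd(3) by (auto simp: southeast_def)
    moreover have "\<pi> q \<noteq> j + 1"
      using q bd(5) \<pi>(2)[of q] by (auto simp: southeast_def)
    ultimately show "q \<in> southeast \<pi> n (i + 1) (\<pi> x)"
      using q \<pi>(1) by (auto simp: southeast_def x_def)
  qed
  then have "k - 2 \<le> card (southeast \<pi> n (i + 1) (\<pi> x))"
    using card card_mono[OF finite_southeast] le_trans by blast
  then show ?thesis
    using contains_pat21I[OF assms(3) x(1,2) _ x(3) finite_southeast _ order.refl]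
      avoids_2143_strict_mono_on_southeast[OF perm av x] bd(1) by simp
qed

theorem theorem3p3:
  fixes \<pi> :: "nat \<Rightarrow> nat" and n k :: nat
  assumes "k \<ge> 3" and "schroeder \<pi> n"
  shows "avoids \<pi> n (pat21 k) \<longleftrightarrow>
    (\<forall>(i,j) \<in> essential_set \<pi> n. int i + int j \<ge> int n + 3 - int k + int (rank \<pi> i j))"
proof -
  have perm: "\<pi> permutes {1..n}" and av: "avoids \<pi> n [2,1,4,3]"
    using assms(2) by (auto simp: schroeder_def)
  have "contains \<pi> n (pat21 k) \<longleftrightarrow>
      (\<exists>(i, j) \<in> essential_set \<pi> n. k - 2 \<le> card (southeast \<pi> n i j))"
    using contains_pat21_imp_essential[OF perm] essential_imp_contains_pat21[OF perm av] assms(1)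
    by fastforce
  moreover have "int n + 3 - int k + int (rank \<pi> i j) \<le> int i + int j \<longleftrightarrow>
      \<not> k - 2 \<le> card (southeast \<pi> n i j)"
    if "(i, j) \<in> essential_set \<pi> n" for i j
    using card_southeast[OF perm, of i j] that assms(1) by (auto simp: essential_set_def)
  ultimately show ?thesis
    unfolding avoids_def by blast
qed

end
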